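(* Consider a sequence of matched studies indexed by $I\to\infty$ with general set sizes $n_i\ge2$, and assume Fisher's null $H_0$ holds. Let $\Gamma\in[1,\infty]^I$ (possibly depending on $I$) satisfy $\Gamma^\star\preccurlyeq\Gamma$, and suppose Conditions A1 and A2($\Gamma$) hold. Then for every $c\ge0$, $$\limsup_{I\to\infty}\mathbb P\{T\ge\mu(\Gamma)+c\,\sigma(\Gamma)\}\le 1-\Phi(c),$$ where $\Phi$ is the standard normal distribution function.
   Context: Setting: $I$ matched sets, set $i$ has $n_i\ge2$ units, $N=\sum_in_i$; potential outcomes fixed; $Z\in\mathcal Z=\{z\in\{0,1\}^N:\sum_jz_{ij}=1\ \forall i\}$ is random with true mechanism $\mathbb P(Z=z)=\prod_i\prod_j(p^\star_{ij})^{z_{ij}}$, $p^\star_{ij}\ge0$, $\sum_jp^\star_{ij}=1$; true hidden bias $\Gamma^\star_i=\max_jp^\star_{ij}/\min_kp^\star_{ik}\in[1,\infty]$; $a\preccurlyeq b$ means coordinatewise $\le$. Fisher's null $H_0$: $Y_{ij}(1)=Y_{ij}(0)$ for all $i,j$. $T=\sum_iT_i$, $T_i=\sum_jZ_{ij}q_{ij}$, $q_{ij}$ fixed functions of $Y(0)$. True moments: $\mu_i=\mathbb ET_i$, $v_i^2=\mathrm{Var}(T_i)$. Sort $q_{i(1)}\le\dots\le q_{i(n_i)}$, $R_i=q_{i(n_i)}-q_{i(1)}$. For $\Gamma_i\in[1,\infty)$ and $1\le a\le n_i-1$: $\mu_{ia}(\Gamma_i)=\frac{\sum_{j\le a}q_{i(j)}+\Gamma_i\sum_{j>a}q_{i(j)}}{a+\Gamma_i(n_i-a)}$,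 $v_{ia}^2(\Gamma_i)=\frac{\sum_{j\le a}q_{i(j)}^2+\Gamma_i\sum_{j>a}q_{i(j)}^2}{a+\Gamma_i(n_i-a)}-\mu_{ia}(\Gamma_i)^2$; $\mu_i(\Gamma_i)=\max_a\mu_{ia}(\Gamma_i)$ and $v_i^2(\Gamma_i)=\max\{v_{ia}^2(\Gamma_i):\mu_{ia}(\Gamma_i)=\mu_i(\Gamma_i)\}$; for $\Gamma_i=\infty$, $\mu_i(\infty)=q_{i(n_i)}$, $v_i^2(\infty)=0$. $\mu(\Gamma)=\sum_i\mu_i(\Gamma_i)$, $\sigma^2(\Gamma)=\sum_iv_i^2(\Gamma_i)$. Condition A1: $(\max_iR_i^2)/\sum_iR_i^2/(n_i\Gamma^\star_i)^3\to0$ (terms with $\Gamma^\star_i=\infty$ are $0$). Condition A2($\Gamma$): with $\mathcal A_\Gamma=\{i:v_i^2>v_i^2(\Gamma_i)\}$, $\Delta_\mu(\Gamma)=|\mathcal A_\Gamma|^{-1}\sum_{i\in\mathcal A_\Gamma}\{\mu_i(\Gamma_i)-\mu_i\}$, $\Delta_{v^2}(\Gamma)=|\mathcal A_\Gamma|^{-1}\sum_{i\in\mathcal A_\Gamma}\{v_i^2-v_i^2(\Gamma_i)\}$ (ratio $\Delta_\mu/\Delta_{v^2}$ defined as $\infty$ if $\mathcal A_\Gamma=\emptyset$), $\frac{\Delta_\mu(\Gamma)}{\Delta_{v^2}(\Gamma)}\sqrt{\sum_iR_i^2/(n_i\Gamma^\star_i)^3}\to\infty$. All quantities may depend on $I$.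 *)

theory Defs
  imports "HOL-Probability.Probability"
begin

(* A single matched set with n units; unit j < n has score qi j and treatment prob pr j. *)

definition sorted_q :: "nat \<Rightarrow> (nat \<Rightarrow> real) \<Rightarrow> real list" where
  "sorted_q n qi = sort (map qi [0..<n])"

definition mu_a :: "nat \<Rightarrow> (nat \<Rightarrow> real) \<Rightarrow> real \<Rightarrow> nat \<Rightarrow> real" where
  "mu_a n qi g a =
     (sum_list (take a (sorted_q n qi)) + g * sum_list (drop a (sorted_q n qi)))
     / (real a + g * (real n - real a))"

definition v2_a :: "nat \<Rightarrow> (nat \<Rightarrow> real) \<Rightarrow> real \<Rightarrow> nat \<Rightarrow> real" where
  "v2_a n qi g a =
     (sum_list (map (\<lambda>x. x\<^sup>2) (take a (sorted_q n qi)))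
        + g * sum_list (map (\<lambda>x. x\<^sup>2) (drop a (sorted_q n qi))))
     / (real a + g * (real n - real a)) - (mu_a n qi g a)\<^sup>2"

definition mu_G :: "nat \<Rightarrow> (nat \<Rightarrow> real) \<Rightarrow> ereal \<Rightarrow> real" where
  "mu_G n qi G =
     (if G = \<infinity> then Max (qi ` {..<n})
      else Max ((mu_a n qi (real_of_ereal G)) ` {1..n-1}))"

definition v2_G :: "nat \<Rightarrow> (nat \<Rightarrow> real) \<Rightarrow> ereal \<Rightarrow> real" where
  "v2_G n qi G =
     (if G = \<infinity> then 0
      else Max {v2_a n qi (real_of_ereal G) a | a. a \<in> {1..n-1} \<and>
                  mu_a n qi (real_of_ereal G) a = mu_G n qi G})"

definition Gamma_star :: "nat \<Rightarrow> (nat \<Rightarrow> real) \<Rightarrow> ereal" where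
  "Gamma_star n pr =
     (if Min (pr ` {..<n}) = 0 then \<infinity>
      else ereal (Max (pr ` {..<n}) / Min (pr ` {..<n})))"

definition Rng :: "nat \<Rightarrow> (nat \<Rightarrow> real) \<Rightarrow> real" where
  "Rng n qi = Max (qi ` {..<n}) - Min (qi ` {..<n})"

definition true_mu :: "nat \<Rightarrow> (nat \<Rightarrow> real) \<Rightarrow> (nat \<Rightarrow> real) \<Rightarrow> real" where
  "true_mu n pr qi = (\<Sum>j<n. pr j * qi j)"

definition true_v2 :: "nat \<Rightarrow> (nat \<Rightarrow> real) \<Rightarrow> (nat \<Rightarrow> real) \<Rightarrow> real" where
  "true_v2 n pr qi = (\<Sum>j<n. pr j * (qi j)\<^sup>2) - (true_mu n pr qi)\<^sup>2"

definition A1_term :: "nat \<Rightarrow> (nat \<Rightarrow> real) \<Rightarrow> (nat \<Rightarrow> real) \<Rightarrow> real" where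
  "A1_term n pr qi =
     (if Gamma_star n pr = \<infinity> then 0
      else (Rng n qi)\<^sup>2 / (real n * real_of_ereal (Gamma_star n pr)) ^ 3)"

(* Whole study with I sets: n i sizes, p i j true probabilities, q i j scores *)

definition S_A1 :: "nat \<Rightarrow> (nat \<Rightarrow> nat) \<Rightarrow> (nat \<Rightarrow> nat \<Rightarrow> real) \<Rightarrow> (nat \<Rightarrow> nat \<Rightarrow> real) \<Rightarrow> real" where
  "S_A1 I n p q = (\<Sum>i<I. A1_term (n i) (p i) (q i))"

(* Assignment space Z: a choice of one treated unit z i < n i in every set i < I *)
definition Zset :: "nat \<Rightarrow> (nat \<Rightarrow> nat) \<Rightarrow> (nat \<Rightarrow> nat) set" where
  "Zset I n = PiE {..<I} (\<lambda>i. {..<n i})"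

definition Tstat :: "nat \<Rightarrow> (nat \<Rightarrow> nat \<Rightarrow> real) \<Rightarrow> (nat \<Rightarrow> nat) \<Rightarrow> real" where
  "Tstat I q z = (\<Sum>i<I. q i (z i))"

definition prob_z :: "nat \<Rightarrow> (nat \<Rightarrow> nat \<Rightarrow> real) \<Rightarrow> (nat \<Rightarrow> nat) \<Rightarrow> real" where
  "prob_z I p z = (\<Prod>i<I. p i (z i))"

definition prob_T_ge :: "nat \<Rightarrow> (nat \<Rightarrow> nat) \<Rightarrow> (nat \<Rightarrow> nat \<Rightarrow> real) \<Rightarrow> (nat \<Rightarrow> nat \<Rightarrow> real) \<Rightarrow> real \<Rightarrow> real" where
  "prob_T_ge I n p q t = (\<Sum>z\<in>Zset I n. if Tstat I q z \<ge> t then prob_z I p z else 0)"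

definition mu_Gamma :: "nat \<Rightarrow> (nat \<Rightarrow> nat) \<Rightarrow> (nat \<Rightarrow> nat \<Rightarrow> real) \<Rightarrow> (nat \<Rightarrow> ereal) \<Rightarrow> real" where
  "mu_Gamma I n q G = (\<Sum>i<I. mu_G (n i) (q i) (G i))"

definition sigma_Gamma :: "nat \<Rightarrow> (nat \<Rightarrow> nat) \<Rightarrow> (nat \<Rightarrow> nat \<Rightarrow> real) \<Rightarrow> (nat \<Rightarrow> ereal) \<Rightarrow> real" where
  "sigma_Gamma I n q G = sqrt (\<Sum>i<I. v2_G (n i) (q i) (G i))"

definition A_set :: "nat \<Rightarrow> (nat \<Rightarrow> nat) \<Rightarrow> (nat \<Rightarrow> nat \<Rightarrow> real) \<Rightarrow> (nat \<Rightarrow> nat \<Rightarrow> real) \<Rightarrow> (nat \<Rightarrow> ereal) \<Rightarrow> nat set" where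
  "A_set I n p q G = {i. i < I \<and> true_v2 (n i) (p i) (q i) > v2_G (n i) (q i) (G i)}"

definition Delta_mu :: "nat \<Rightarrow> (nat \<Rightarrow> nat) \<Rightarrow> (nat \<Rightarrow> nat \<Rightarrow> real) \<Rightarrow> (nat \<Rightarrow> nat \<Rightarrow> real) \<Rightarrow> (nat \<Rightarrow> ereal) \<Rightarrow> real" where
  "Delta_mu I n p q G =
     (\<Sum>i\<in>A_set I n p q G. mu_G (n i) (q i) (G i) - true_mu (n i) (p i) (q i))
       / real (card (A_set I n p q G))"

definition Delta_v2 :: "nat \<Rightarrow> (nat \<Rightarrow> nat) \<Rightarrow> (nat \<Rightarrow> nat \<Rightarrow> real) \<Rightarrow> (nat \<Rightarrow> nat \<Rightarrow> real) \<Rightarrow> (nat \<Rightarrow> ereal) \<Rightarrow> real" where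
  "Delta_v2 I n p q G =
     (\<Sum>i\<in>A_set I n p q G. true_v2 (n i) (p i) (q i) - v2_G (n i) (q i) (G i))
       / real (card (A_set I n p q G))"

definition A2_quantity :: "nat \<Rightarrow> (nat \<Rightarrow> nat) \<Rightarrow> (nat \<Rightarrow> nat \<Rightarrow> real) \<Rightarrow> (nat \<Rightarrow> nat \<Rightarrow> real) \<Rightarrow> (nat \<Rightarrow> ereal) \<Rightarrow> ereal" where
  "A2_quantity I n p q G =
     (if A_set I n p q G = {} then \<infinity>
      else ereal (Delta_mu I n p q G / Delta_v2 I n p q G * sqrt (S_A1 I n p q)))"

definition Phi :: "real \<Rightarrow> real" where
  "Phi = cdf (density lborel std_normal_density)"

end

theory Submission
  imports Defs
begin

text \<open>Under Fisher's null T is a sum of independent bounded terms T_i. Since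
  min_j p_ij \<ge> 1/(n_i Gamma*_i), the true variance v_i^2 dominates R_i^2/(n_i Gamma*_i)^3,
  so A1 is a Lyapunov condition and (T - sum mu_i)/v is asymptotically standard normal
  (characteristic functions and Levy's continuity theorem). Any mechanism with bias at most
  Gamma_i has mean at most mu_i(Gamma_i), the maximum being attained by a two-level weighting
  of the ordered scores. Condition A2 makes the total excess sum (mu_i(Gamma_i) - mu_i) beat
  c times the variance deficit, so eventually sum mu_i + c v \<le> mu(Gamma) + c sigma(Gamma),
  and the tail bound follows from the normal limit.\<close>

lemma sorted_take_drop_filter_le:
  fixes ys :: "real list" and L :: real
  assumes "sorted ys"
  shows "take (length (filter (\<lambda>y. y \<le> L) ys)) ys = filter (\<lambda>y. y \<le> L) ys
       \<and> drop (length (filter (\<lambda>y. y \<le> L) ys)) ys = filter (\<lambda>y. \<not> y \<le> L) ys"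
  using assms
proof (induction ys)
  case (Cons x xs)
  show ?case
  proof (cases "x \<le> L")
    case False
    then have "\<forall>y\<in>set xs. \<not> y \<le> L" using Cons.prems by auto
    then have "filter (\<lambda>y. y \<le> L) xs = []" "filter (\<lambda>y. \<not> y \<le> L) xs = xs"
      by (auto simp: filter_empty_conv)
    then show ?thesis using False by simp
  qed (use Cons in simp)
qed simp

lemma sum_list_map_minus_const:
  fixes xs :: "real list"
  shows "sum_list (map (\<lambda>y. y - c) xs) = sum_list xs - real (length xs) * c"
  by (induction xs) (auto simp: algebra_simps)

lemma sum_list_map_square_dev:
  fixes xs :: "real list"
  shows "sum_list (map (\<lambda>y. (y - m)\<^sup>2) xs) =
     sum_list (map (\<lambda>y. y\<^sup>2) xs) - 2 * m * sum_list xs + real (length xs) * m\<^sup>2"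
  by (induction xs) (auto simp: algebra_simps power2_eq_square)

lemma sum_list_map_sort:
  fixes f :: "'a::linorder \<Rightarrow> 'b::comm_monoid_add"
  shows "sum_list (map f (sort xs)) = sum_list (map f xs)"
  by (metis mset_map mset_sort sum_mset_sum_list)

lemma length_sorted_q [simp]: "length (sorted_q n qi) = n"
  by (simp add: sorted_q_def)

lemma sorted_sorted_q: "sorted (sorted_q n qi)"
  by (simp add: sorted_q_def)

lemma sum_list_map_sorted_q:
  fixes f :: "real \<Rightarrow> 'b::comm_monoid_add"
  shows "sum_list (map f (sorted_q n qi)) = (\<Sum>j<n. f (qi j))"
  by (simp add: sorted_q_def sum_list_map_sort interv_sum_list_conv_sum_set_nat
      atLeast0LessThan comp_def)

lemma mu_a_denominator_pos:
  assumes "a \<le> n" "1 \<le> (g::real)" "1 \<le> n"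
  shows "real a + g * (real n - real a) > 0"
proof -
  have "g * (real n - real a) \<ge> 1 * (real n - real a)"
    using assms by (intro mult_right_mono) auto
  then show ?thesis using assms by auto
qed

lemma mu_a_minus_eq:
  assumes "a \<le> n" "1 \<le> (g::real)" "1 \<le> n"
  shows "(real a + g * (real n - real a)) * (mu_a n qi g a - L) =
     sum_list (map (\<lambda>y. y - L) (take a (sorted_q n qi)))
     + g * sum_list (map (\<lambda>y. y - L) (drop a (sorted_q n qi)))"
proof -
  have "(real a + g * (real n - real a)) * mu_a n qi g a =
      sum_list (take a (sorted_q n qi)) + g * sum_list (drop a (sorted_q n qi))"
    using mu_a_denominator_pos[OF assms] unfolding mu_a_def by simp
  then show ?thesis using assms
    by (simp add: sum_list_map_minus_const algebra_simps of_nat_diff)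
qed

lemma v2_a_nonneg:
  assumes "a \<le> n" "1 \<le> (g::real)" "1 \<le> n"
  shows "v2_a n qi g a \<ge> 0"
proof -
  define W where "W = real a + g * (real n - real a)"
  define m where "m = mu_a n qi g a"
  define A where "A = take a (sorted_q n qi)"
  define B where "B = drop a (sorted_q n qi)"
  have W: "W > 0" using mu_a_denominator_pos assms W_def by blast
  have lA: "length A = a" and lB: "length B = n - a" using assms by (auto simp: A_def B_def)
  have mW: "W * m = sum_list A + g * sum_list B"
    using W unfolding mu_a_def m_def W_def A_def B_def by simp
  have "0 \<le> sum_list (map (\<lambda>y. (y - m)\<^sup>2) A) + g * sum_list (map (\<lambda>y. (y - m)\<^sup>2) B)"
    using assms by (intro add_nonneg_nonneg mult_nonneg_nonneg sum_list_nonneg) auto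
  also have "\<dots> = (sum_list (map (\<lambda>y. y\<^sup>2) A) + g * sum_list (map (\<lambda>y. y\<^sup>2) B))
      - 2 * m * (sum_list A + g * sum_list B) + W * m\<^sup>2"
    unfolding sum_list_map_square_dev lA lB W_def using assms by (simp add: algebra_simps of_nat_diff)
  also have "\<dots> = (sum_list (map (\<lambda>y. y\<^sup>2) A) + g * sum_list (map (\<lambda>y. y\<^sup>2) B)) - W * m\<^sup>2"
    unfolding mW[symmetric] by (simp add: power2_eq_square)
  finally have "0 \<le> (sum_list (map (\<lambda>y. y\<^sup>2) A) + g * sum_list (map (\<lambda>y. y\<^sup>2) B)) / W - m\<^sup>2"
    using W by (simp add: field_simps)
  then show ?thesis unfolding v2_a_def m_def A_def B_def W_def .
qed

text \<open>The number k of ordered scores below L = max mu_a is a split point of mu_a, at which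
  mu_a \<le> L; the case k = 0 is impossible because the split at 1 would give mu_a > L.\<close>
lemma split_deviation_sum_nonpos:
  fixes g :: real and q :: "nat \<Rightarrow> real"
  assumes n: "2 \<le> n" and g: "1 \<le> g"
  defines "L \<equiv> Max (mu_a n q g ` {1..n-1})" and "ys \<equiv> sorted_q n q"
  shows "sum_list (map (\<lambda>y. y - L) (filter (\<lambda>y. y \<le> L) ys))
       + g * sum_list (map (\<lambda>y. y - L) (filter (\<lambda>y. \<not> y \<le> L) ys)) \<le> 0"
proof -
  have muL: "mu_a n q g a \<le> L" if "a \<in> {1..n-1}" for a
    unfolding L_def using that by (intro Max_ge) auto
  have split_le: "(real a + g * (real n - real a)) * (mu_a n q g a - L) \<le> 0" if "a \<in> {1..n-1}" for a
    using muL[OF that] mu_a_denominator_pos[of a n g] n g that by (intro mult_nonneg_nonpos) auto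
  define k where "k = length (filter (\<lambda>y. y \<le> L) ys)"
  have tf: "take k ys = filter (\<lambda>y. y \<le> L) ys" "drop k ys = filter (\<lambda>y. \<not> y \<le> L) ys"
    using sorted_take_drop_filter_le[OF sorted_sorted_q, of L n q] unfolding k_def ys_def by auto
  have kn: "k \<le> n" unfolding k_def ys_def by (metis length_filter_le length_sorted_q)
  consider "k = 0" | "k = n" | "k \<in> {1..n-1}" using kn by fastforce
  then show ?thesis
  proof cases
    case 1
    then have allgt: "\<forall>y\<in>set ys. L < y" unfolding k_def by (auto simp: filter_empty_conv)
    have "take 1 ys = [hd ys]" "hd ys \<in> set ys" using n unfolding ys_def
      by (metis One_nat_def Suc_1 hd_in_set length_sorted_q list.size(3) not_less_eq_eq
          take0 take_Suc zero_le)+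
    then have "0 < sum_list (map (\<lambda>y. y - L) (take 1 ys))" using allgt by auto
    moreover have "0 \<le> g * sum_list (map (\<lambda>y. y - L) (drop 1 ys))"
      using allgt g by (intro mult_nonneg_nonneg sum_list_nonneg) (auto dest!: in_set_dropD)
    ultimately have "0 < (real 1 + g * (real n - real 1)) * (mu_a n q g 1 - L)"
      using mu_a_minus_eq[of 1 n g q L] n g unfolding ys_def by linarith
    moreover have "1 \<in> {1..n-1}" using n by auto
    ultimately show ?thesis using split_le[of 1] by simp
  next
    case 2
    then have "filter (\<lambda>y. \<not> y \<le> L) ys = []" using tf(2) by (simp add: ys_def)
    moreover have "sum_list (map (\<lambda>y. y - L) (filter (\<lambda>y. y \<le> L) ys)) \<le> 0"
      by (intro sum_list_nonpos) auto
    ultimately show ?thesis by simp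
  next
    case 3
    with split_le[of k] show ?thesis
      using mu_a_minus_eq[of k n g q L] kn n g tf unfolding ys_def by simp
  qed
qed

text \<open>With L the maximum, p j (q j - L) is at most m (q j - L) below L and g m (q j - L)
  above it.\<close>
lemma weighted_mean_le_Max_mu_a:
  fixes p q :: "nat \<Rightarrow> real" and g m :: real
  assumes n: "2 \<le> n" and g: "1 \<le> g" and m: "0 < m"
    and p_lower: "\<And>j. j < n \<Longrightarrow> m \<le> p j" and p_upper: "\<And>j. j < n \<Longrightarrow> p j \<le> g * m"
    and p_sum: "(\<Sum>j<n. p j) = 1"
  shows "(\<Sum>j<n. p j * q j) \<le> Max (mu_a n q g ` {1..n-1})"
proof -
  define L where "L = Max (mu_a n q g ` {1..n-1})"
  define f where "f y = (if y \<le> L then y - L else g * (y - L))" for y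
  define ys where "ys = sorted_q n q"
  have "(\<Sum>j<n. p j * (q j - L)) = (\<Sum>j<n. p j * q j) - L * (\<Sum>j<n. p j)"
    by (simp add: algebra_simps sum_subtractf sum_distrib_left)
  then have "(\<Sum>j<n. p j * q j) - L = (\<Sum>j<n. p j * (q j - L))"
    using p_sum by simp
  also have "\<dots> \<le> (\<Sum>j<n. m * f (q j))"
  proof (intro sum_mono)
    fix j assume "j \<in> {..<n}"
    then show "p j * (q j - L) \<le> m * f (q j)"
      using p_lower[of j] p_upper[of j] unfolding f_def
      by (auto simp: mult_right_mono_neg mult_right_mono mult.commute)
  qed
  also have "\<dots> = m * sum_list (map f ys)"
    by (simp add: ys_def sum_list_map_sorted_q sum_distrib_left)
  also have "sum_list (map f ys) = sum_list (map (\<lambda>y. y - L) (filter (\<lambda>y. y \<le> L) ys))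
       + g * sum_list (map (\<lambda>y. y - L) (filter (\<lambda>y. \<not> y \<le> L) ys))"
    by (induction ys) (auto simp: f_def algebra_simps)
  also have "m * \<dots> \<le> 0"
    using split_deviation_sum_nonpos[OF n g, of q] m
    unfolding L_def ys_def by (simp add: mult_nonneg_nonpos)
  finally show ?thesis unfolding L_def by simp
qed

lemma Gamma_star_finite_bounds:
  fixes p :: "nat \<Rightarrow> real"
  assumes n: "1 \<le> n" and p0: "\<And>j. j < n \<Longrightarrow> 0 \<le> p j"
    and fin: "Gamma_star n p = ereal g"
  defines "m \<equiv> Min (p ` {..<n})"
  shows "0 < m" "\<And>j. j < n \<Longrightarrow> m \<le> p j" "\<And>j. j < n \<Longrightarrow> p j \<le> g * m"
proof -
  have ne: "finite (p ` {..<n})" "p ` {..<n} \<noteq> {}" using n by (auto simp: lessThan_empty_iff)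
  show m_le: "m \<le> p j" if "j < n" for j unfolding m_def using ne that by auto
  have "m \<noteq> 0" using fin unfolding Gamma_star_def m_def by (auto split: if_splits)
  moreover have "0 \<le> m" unfolding m_def using ne p0 by (auto simp: Min_ge_iff)
  ultimately show m_pos: "0 < m" by simp
  have g: "g = Max (p ` {..<n}) / m"
    using fin \<open>m \<noteq> 0\<close> unfolding Gamma_star_def m_def by simp
  show "p j \<le> g * m" if "j < n" for j
    using ne that m_pos unfolding g by auto
qed

lemma true_mu_le_mu_G:
  fixes p q :: "nat \<Rightarrow> real"
  assumes n: "2 \<le> n" and p0: "\<And>j. j < n \<Longrightarrow> 0 \<le> p j" and p_sum: "(\<Sum>j<n. p j) = 1"
    and G1: "1 \<le> G" and G_dom: "Gamma_star n p \<le> G"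
  shows "true_mu n p q \<le> mu_G n q G"
proof (cases "G = \<infinity>")
  case True
  have "true_mu n p q \<le> (\<Sum>j<n. p j * Max (q ` {..<n}))"
    unfolding true_mu_def using p0 by (intro sum_mono mult_left_mono) auto
  also have "\<dots> = Max (q ` {..<n})" using p_sum by (simp add: sum_distrib_right[symmetric])
  finally show ?thesis using True by (simp add: mu_G_def)
next
  case False
  then obtain g where g: "G = ereal g" using G1 by (cases G) auto
  obtain gs where gs: "Gamma_star n p = ereal gs"
    using G_dom g unfolding Gamma_star_def by (auto split: if_splits)
  define m where "m = Min (p ` {..<n})"
  have m_pos: "0 < m" and m_le: "\<And>j. j < n \<Longrightarrow> m \<le> p j"
    and p_le: "\<And>j. j < n \<Longrightarrow> p j \<le> gs * m"
    using Gamma_star_finite_bounds[of n p gs] n p0 gs unfolding m_def by auto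
  have "gs \<le> g" using G_dom g gs by simp
  then have "p j \<le> g * m" if "j < n" for j
    using p_le[OF that] m_pos by (meson mult_right_mono less_imp_le order_trans)
  then have "(\<Sum>j<n. p j * q j) \<le> Max (mu_a n q g ` {1..n-1})"
    using weighted_mean_le_Max_mu_a[OF n _ m_pos m_le _ p_sum] G1 g by auto
  then show ?thesis using g by (simp add: mu_G_def true_mu_def)
qed

lemma v2_G_nonneg:
  assumes n: "2 \<le> n" and G1: "1 \<le> G"
  shows "0 \<le> v2_G n q G"
proof (cases "G = \<infinity>")
  case False
  then obtain g where g: "G = ereal g" using G1 by (cases G) auto
  have g1: "1 \<le> g" using G1 g by simp
  have "mu_G n q G \<in> mu_a n q g ` {1..n-1}"
    unfolding mu_G_def using False g n by (simp del: atLeastAtMost_iff)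
  then obtain a where a: "a \<in> {1..n-1}" "mu_a n q g a = mu_G n q G" by auto
  have fin: "finite {v2_a n q g a | a. a \<in> {1..n-1} \<and> mu_a n q g a = mu_G n q G}" by simp
  have "0 \<le> v2_a n q g a" using a n g1 by (intro v2_a_nonneg) auto
  also have "\<dots> \<le> Max {v2_a n q g a | a. a \<in> {1..n-1} \<and> mu_a n q g a = mu_G n q G}"
    using a by (intro Max_ge[OF fin]) blast
  finally show ?thesis unfolding v2_G_def using False g by simp
qed (simp add: v2_G_def)

lemma true_v2_eq_centered:
  fixes p q :: "nat \<Rightarrow> real"
  assumes p_sum: "(\<Sum>j<n. p j) = 1"
  shows "true_v2 n p q = (\<Sum>j<n. p j * (q j - true_mu n p q)\<^sup>2)"
proof -
  define mu where "mu = true_mu n p q"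
  have "(\<Sum>j<n. p j * (q j - mu)\<^sup>2)
      = (\<Sum>j<n. p j * (q j)\<^sup>2) - 2 * mu * (\<Sum>j<n. p j * q j) + mu\<^sup>2 * (\<Sum>j<n. p j)"
    by (simp add: power2_diff algebra_simps sum.distrib sum_subtractf sum_distrib_left
        sum_distrib_right)
  also have "(\<Sum>j<n. p j * q j) = mu" by (simp add: mu_def true_mu_def)
  finally show ?thesis using p_sum unfolding true_v2_def mu_def by (simp add: power2_eq_square)
qed

lemma true_v2_nonneg:
  assumes "\<And>j. j < n \<Longrightarrow> 0 \<le> p j" and "(\<Sum>j<n. p j) = 1"
  shows "0 \<le> true_v2 n p q"
  unfolding true_v2_eq_centered[OF assms(2)] using assms(1)
  by (intro sum_nonneg mult_nonneg_nonneg) auto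

lemma true_mu_bounds:
  assumes n: "1 \<le> n" and p0: "\<And>j. j < n \<Longrightarrow> 0 \<le> p j" and p_sum: "(\<Sum>j<n. p j) = 1"
  shows "Min (q ` {..<n}) \<le> true_mu n p q" "true_mu n p q \<le> Max (q ` {..<n})"
proof -
  have ne: "finite (q ` {..<n})" "q ` {..<n} \<noteq> {}" using n by (auto simp: lessThan_empty_iff)
  have "(\<Sum>j<n. p j * Min (q ` {..<n})) \<le> true_mu n p q"
    unfolding true_mu_def using p0 ne by (intro sum_mono mult_left_mono) auto
  then show "Min (q ` {..<n}) \<le> true_mu n p q"
    using p_sum by (simp add: sum_distrib_right[symmetric])
  have "true_mu n p q \<le> (\<Sum>j<n. p j * Max (q ` {..<n}))"
    unfolding true_mu_def using p0 ne by (intro sum_mono mult_left_mono) auto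
  then show "true_mu n p q \<le> Max (q ` {..<n})"
    using p_sum by (simp add: sum_distrib_right[symmetric])
qed

lemma abs_minus_true_mu_le_Rng:
  assumes n: "1 \<le> n" and p0: "\<And>j. j < n \<Longrightarrow> 0 \<le> p j" and p_sum: "(\<Sum>j<n. p j) = 1"
    and j: "j < n"
  shows "\<bar>q j - true_mu n p q\<bar> \<le> Rng n q"
proof -
  have "Min (q ` {..<n}) \<le> q j" "q j \<le> Max (q ` {..<n})" using j by auto
  then show ?thesis using true_mu_bounds[OF n p0 p_sum, of q] unfolding Rng_def by auto
qed

text \<open>Only the two units attaining the extreme scores are needed.\<close>
lemma Min_times_Rng_sq_le_true_v2:
  fixes p q :: "nat \<Rightarrow> real"
  assumes n: "1 \<le> n" and p0: "\<And>j. j < n \<Longrightarrow> 0 \<le> p j" and p_sum: "(\<Sum>j<n. p j) = 1"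
  shows "Min (p ` {..<n}) * (Rng n q)\<^sup>2 / 2 \<le> true_v2 n p q"
proof -
  define m where "m = Min (p ` {..<n})"
  define mu where "mu = true_mu n p q"
  have ne: "finite (q ` {..<n})" "q ` {..<n} \<noteq> {}" using n by (auto simp: lessThan_empty_iff)
  obtain a where a: "a < n" "q a = Max (q ` {..<n})" using Max_in[OF ne] by auto
  obtain b where b: "b < n" "q b = Min (q ` {..<n})" using Min_in[OF ne] by auto
  have R: "Rng n q = (q a - mu) - (q b - mu)" unfolding Rng_def using a b by simp
  have m_le: "m \<le> p j" if "j < n" for j unfolding m_def using that by auto
  have m0: "0 \<le> m" unfolding m_def using p0 n by (auto simp: Min_ge_iff lessThan_empty_iff)
  show ?thesis
  proof (cases "a = b")
    case True
    then show ?thesis using R true_v2_nonneg[OF p0 p_sum] by simp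
  next
    case False
    have "(x - y)\<^sup>2 / 2 \<le> x\<^sup>2 + y\<^sup>2" for x y :: real
    proof -
      have half: "a / 2 \<le> c" if "a + b = 2 * c" "0 \<le> b" for a b c :: real
        using that by linarith
      show ?thesis
        by (rule half[of _ "(x + y)\<^sup>2"]) (simp_all only: zero_le_power2,
            simp add: power2_eq_square algebra_simps)
    qed
    from this[of "q a - mu" "q b - mu"]
    have "(Rng n q)\<^sup>2 / 2 \<le> (q a - mu)\<^sup>2 + (q b - mu)\<^sup>2" unfolding R .
    then have "m * ((Rng n q)\<^sup>2 / 2) \<le> m * ((q a - mu)\<^sup>2 + (q b - mu)\<^sup>2)"
      using m0 by (intro mult_left_mono)
    also have "\<dots> \<le> p a * (q a - mu)\<^sup>2 + p b * (q b - mu)\<^sup>2"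
      using m_le a b by (simp add: distrib_left add_mono mult_right_mono)
    also have "\<dots> = (\<Sum>j\<in>{a,b}. p j * (q j - mu)\<^sup>2)" using False by simp
    also have "\<dots> \<le> (\<Sum>j<n. p j * (q j - mu)\<^sup>2)"
      using a b p0 by (intro sum_mono2) auto
    finally show ?thesis unfolding true_v2_eq_centered[OF p_sum] mu_def m_def by simp
  qed
qed

text \<open>Since 1 = sum p \<le> n max p = n Gamma* min p, the smallest probability is at least
  1/(n Gamma*); so A1 is a Lyapunov-type condition on the true variances.\<close>
lemma A1_term_le_true_v2:
  fixes p q :: "nat \<Rightarrow> real"
  assumes n: "2 \<le> n" and p0: "\<And>j. j < n \<Longrightarrow> 0 \<le> p j" and p_sum: "(\<Sum>j<n. p j) = 1"
  shows "A1_term n p q \<le> true_v2 n p q"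
proof (cases "Gamma_star n p = \<infinity>")
  case True
  then show ?thesis using true_v2_nonneg[OF p0 p_sum] by (simp add: A1_term_def)
next
  case False
  then obtain gs where gs: "Gamma_star n p = ereal gs"
    unfolding Gamma_star_def by (auto split: if_splits)
  define m where "m = Min (p ` {..<n})"
  define N where "N = real n * gs"
  have m_pos: "0 < m" and m_le: "\<And>j. j < n \<Longrightarrow> m \<le> p j"
    and p_le: "\<And>j. j < n \<Longrightarrow> p j \<le> gs * m"
    using Gamma_star_finite_bounds[of n p gs] n p0 gs unfolding m_def by auto
  have "m * 1 \<le> m * gs" using m_le[of 0] p_le[of 0] n by (simp add: mult.commute)
  then have "1 \<le> gs" using m_pos by simp
  then have "real 2 * 1 \<le> real n * gs" using n by (intro mult_mono) auto
  then have N2: "2 \<le> N" unfolding N_def by simp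
  have "1 \<le> (\<Sum>j<n. gs * m)" using p_sum p_le sum_mono[of "{..<n}" p "\<lambda>_. gs * m"] by simp
  then have Nm: "1 \<le> N * m" unfolding N_def by (simp add: mult.assoc)
  have "1 / N ^ 3 \<le> m / 2"
  proof -
    have "2 * 1 \<le> N * N" using N2 by (intro mult_mono) auto
    then have "2 * 1 \<le> N * N * (N * m)" using Nm N2 by (intro mult_mono) auto
    then show ?thesis using N2 m_pos by (simp add: field_simps power3_eq_cube)
  qed
  then have "(Rng n q)\<^sup>2 * (1 / N ^ 3) \<le> (Rng n q)\<^sup>2 * (m / 2)"
    by (intro mult_left_mono) auto
  then have "A1_term n p q \<le> m * (Rng n q)\<^sup>2 / 2"
    unfolding A1_term_def using False gs N_def by (simp add: mult.commute)
  also have "\<dots> \<le> true_v2 n p q"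
    using Min_times_Rng_sq_le_true_v2[OF _ p0 p_sum] n unfolding m_def by simp
  finally show ?thesis .
qed

definition finite_pmf :: "'a set \<Rightarrow> ('a \<Rightarrow> real) \<Rightarrow> 'a pmf" where
  "finite_pmf A f = embed_pmf (\<lambda>x. if x \<in> A then f x else 0)"

lemma pmf_finite_pmf:
  assumes A: "finite A" and f0: "\<And>x. x \<in> A \<Longrightarrow> 0 \<le> f x" and f1: "sum f A = 1"
  shows "pmf (finite_pmf A f) x = (if x \<in> A then f x else 0)"
  unfolding finite_pmf_def
proof (rule pmf_embed_pmf)
  show "\<And>x. 0 \<le> (if x \<in> A then f x else 0)" using f0 by auto
  have "(\<integral>\<^sup>+x. ennreal (if x \<in> A then f x else 0) \<partial>count_space UNIV)
      = (\<integral>\<^sup>+x. ennreal (f x) * indicator A x \<partial>count_space UNIV)"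
    by (intro nn_integral_cong) (auto simp: indicator_def)
  also have "\<dots> = (\<integral>\<^sup>+x. ennreal (f x) \<partial>count_space A)"
    by (simp add: nn_integral_count_space_indicator)
  also have "\<dots> = (\<Sum>x\<in>A. ennreal (f x))" using A by (simp add: nn_integral_count_space_finite)
  also have "\<dots> = ennreal (sum f A)" using f0 by simp
  also have "\<dots> = 1" using f1 by simp
  finally show "(\<integral>\<^sup>+x. ennreal (if x \<in> A then f x else 0) \<partial>count_space UNIV) = 1" .
qed

lemma integral_finite_pmf:
  fixes g :: "'a \<Rightarrow> 'b::{banach, second_countable_topology}"
  assumes A: "finite A" and f0: "\<And>x. x \<in> A \<Longrightarrow> 0 \<le> f x" and f1: "sum f A = 1"
  shows "(LINT x|measure_pmf (finite_pmf A f). g x) = (\<Sum>a\<in>A. f a *\<^sub>R g a)"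
proof -
  have "(LINT x|measure_pmf (finite_pmf A f). g x) = (\<Sum>a\<in>A. pmf (finite_pmf A f) a *\<^sub>R g a)"
    by (rule integral_measure_pmf[OF A])
      (auto simp: set_pmf_eq pmf_finite_pmf[OF A f0 f1] split: if_splits)
  then show ?thesis by (simp add: pmf_finite_pmf[OF A f0 f1])
qed

lemma measure_distr_finite_pmf:
  assumes A: "finite A" and f0: "\<And>x. x \<in> A \<Longrightarrow> 0 \<le> f x" and f1: "sum f A = 1"
    and S: "S \<in> sets borel"
  shows "measure (distr (measure_pmf (finite_pmf A f)) borel W) S
       = (\<Sum>a\<in>A. f a * indicator S (W a))"
proof -
  have "measure (distr (measure_pmf (finite_pmf A f)) borel W) S
      = (LINT x|measure_pmf (finite_pmf A f). indicator (W -` S) x)"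
    using S by (subst measure_distr) auto
  also have "\<dots> = (\<Sum>a\<in>A. f a *\<^sub>R indicator (W -` S) a)"
    by (rule integral_finite_pmf[OF A f0 f1])
  finally show ?thesis by (simp add: indicator_def)
qed

definition assignment_pmf :: "nat \<Rightarrow> (nat \<Rightarrow> nat) \<Rightarrow> (nat \<Rightarrow> nat \<Rightarrow> real) \<Rightarrow> (nat \<Rightarrow> nat) pmf"
  where "assignment_pmf I n p = finite_pmf (Zset I n) (prob_z I p)"

lemma finite_Zset: "finite (Zset I n)"
  unfolding Zset_def by (intro finite_PiE) auto

lemma prob_z_nonneg:
  assumes "\<And>i j. i < I \<Longrightarrow> j < n i \<Longrightarrow> 0 \<le> p i j" and "z \<in> Zset I n"
  shows "0 \<le> prob_z I p z"
  using assms unfolding prob_z_def Zset_def by (auto intro!: prod_nonneg simp: PiE_iff)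

lemma sum_Zset_prod:
  fixes f :: "nat \<Rightarrow> nat \<Rightarrow> 'c::comm_semiring_1"
  shows "(\<Sum>z\<in>Zset I n. \<Prod>i<I. f i (z i)) = (\<Prod>i<I. \<Sum>j<n i. f i j)"
  unfolding Zset_def by (rule prod_sum_PiE[symmetric]) auto

lemma sum_prob_z_eq_1:
  assumes "\<And>i. i < I \<Longrightarrow> (\<Sum>j<n i. p i j) = 1"
  shows "(\<Sum>z\<in>Zset I n. prob_z I p z) = 1"
  unfolding prob_z_def sum_Zset_prod using assms by simp

lemma measure_distr_assignment_pmf:
  assumes "\<And>i j. i < I \<Longrightarrow> j < n i \<Longrightarrow> 0 \<le> p i j"
    and "\<And>i. i < I \<Longrightarrow> (\<Sum>j<n i. p i j) = 1" and "S \<in> sets borel"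
  shows "measure (distr (measure_pmf (assignment_pmf I n p)) borel W) S
       = (\<Sum>z\<in>Zset I n. prob_z I p z * indicator S (W z))"
  unfolding assignment_pmf_def using assms
  by (intro measure_distr_finite_pmf finite_Zset sum_prob_z_eq_1) (auto intro: prob_z_nonneg)

lemma char_distr_sum_assignment:
  fixes n :: "nat \<Rightarrow> nat" and p y :: "nat \<Rightarrow> nat \<Rightarrow> real"
  assumes p0: "\<And>i j. i < I \<Longrightarrow> j < n i \<Longrightarrow> 0 \<le> p i j"
    and p_sum: "\<And>i. i < I \<Longrightarrow> (\<Sum>j<n i. p i j) = 1"
  shows "char (distr (measure_pmf (assignment_pmf I n p)) borel (\<lambda>z. \<Sum>i<I. y i (z i))) t
       = (\<Prod>i<I. \<Sum>j<n i. p i j *\<^sub>R iexp (t * y i j))"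
proof -
  have "char (distr (measure_pmf (assignment_pmf I n p)) borel (\<lambda>z. \<Sum>i<I. y i (z i))) t
      = (CLINT z|measure_pmf (assignment_pmf I n p). iexp (t * (\<Sum>i<I. y i (z i))))"
    unfolding char_def by (subst integral_distr) auto
  also have "\<dots> = (\<Sum>z\<in>Zset I n. prob_z I p z *\<^sub>R iexp (t * (\<Sum>i<I. y i (z i))))"
    unfolding assignment_pmf_def using assms
    by (intro integral_finite_pmf finite_Zset sum_prob_z_eq_1) (auto intro: prob_z_nonneg)
  also have "\<dots> = (\<Sum>z\<in>Zset I n. \<Prod>i<I. p i (z i) *\<^sub>R iexp (t * y i (z i)))"
    by (simp add: prob_z_def scaleR_conv_of_real of_real_prod prod.distrib sum_distrib_left
        exp_sum algebra_simps flip: exp_of_real)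
  also have "\<dots> = (\<Prod>i<I. \<Sum>j<n i. p i j *\<^sub>R iexp (t * y i j))"
    by (rule sum_Zset_prod)
  finally show ?thesis .
qed

lemma norm_weighted_iexp_sum_le_1:
  fixes p y :: "nat \<Rightarrow> real"
  assumes p0: "\<And>j. j < n \<Longrightarrow> 0 \<le> p j" and p_sum: "(\<Sum>j<n. p j) = 1"
  shows "cmod (\<Sum>j<n. p j *\<^sub>R iexp (t * y j)) \<le> 1"
proof -
  have "cmod (\<Sum>j<n. p j *\<^sub>R iexp (t * y j)) \<le> (\<Sum>j<n. cmod (p j *\<^sub>R iexp (t * y j)))"
    by (rule norm_sum)
  also have "\<dots> = (\<Sum>j<n. p j)"
    using p0 by (intro sum.cong) (auto simp: norm_exp_i_times)
  finally show ?thesis using p_sum by simp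
qed

lemma norm_weighted_iexp_sum_taylor:
  fixes p y :: "nat \<Rightarrow> real"
  assumes p0: "\<And>j. j < n \<Longrightarrow> 0 \<le> p j" and p_sum: "(\<Sum>j<n. p j) = 1"
    and centred: "(\<Sum>j<n. p j * y j) = 0"
    and y_le: "\<And>j. j < n \<Longrightarrow> \<bar>y j\<bar> \<le> r"
  defines "s \<equiv> \<Sum>j<n. p j * (y j)\<^sup>2"
  shows "cmod ((\<Sum>j<n. p j *\<^sub>R iexp (t * y j)) - complex_of_real (1 - t\<^sup>2 * s / 2))
           \<le> \<bar>t\<bar> ^ 3 * r * s / 6"
proof -
  define a where "a j = complex_of_real (1 - (t * y j)\<^sup>2 / 2) + \<i> * complex_of_real (t * y j)"
    for j
  have a_split: "p j *\<^sub>R a j = complex_of_real (p j * (1 - (t * y j)\<^sup>2 / 2))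
      + \<i> * complex_of_real (t * (p j * y j))" for j
    by (simp add: a_def scaleR_conv_of_real algebra_simps)
  have "(\<Sum>j<n. p j *\<^sub>R a j)
      = complex_of_real (\<Sum>j<n. p j * (1 - (t * y j)\<^sup>2 / 2))
        + \<i> * complex_of_real (t * (\<Sum>j<n. p j * y j))"
    unfolding a_split sum.distrib by (simp add: of_real_sum[symmetric] sum_distrib_left[symmetric])
  also have "(\<Sum>j<n. p j * (1 - (t * y j)\<^sup>2 / 2)) = (\<Sum>j<n. p j) - t\<^sup>2 / 2 * s"
    unfolding s_def
    by (simp add: algebra_simps sum_subtractf sum_distrib_left power_mult_distrib)
  finally have sum_a: "(\<Sum>j<n. p j *\<^sub>R a j) = complex_of_real (1 - t\<^sup>2 * s / 2)"
    using p_sum centred by simp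
  have remainder: "cmod (iexp (t * y j) - a j) \<le> \<bar>t\<bar> ^ 3 * r * (y j)\<^sup>2 / 6" if "j < n" for j
  proof -
    have taylor2: "(\<Sum>k\<le>2. (\<i> * complex_of_real x) ^ k / fact k)
        = complex_of_real (1 - x\<^sup>2 / 2) + \<i> * complex_of_real x" for x
      by (simp add: numeral_2_eq_2 power2_eq_square field_simps)
    have "cmod (iexp (t * y j) - a j) \<le> \<bar>t * y j\<bar> ^ Suc 2 / fact (Suc 2)"
      using iexp_approx1[of "t * y j" 2] unfolding a_def taylor2 by simp
    also have "\<dots> = \<bar>t\<bar> ^ 3 * (\<bar>y j\<bar> * (y j)\<^sup>2) / 6"
      by (simp add: fact_numeral abs_mult power_mult_distrib power3_eq_cube power2_eq_square
          abs_mult_self_eq flip: abs_mult)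
    also have "\<dots> \<le> \<bar>t\<bar> ^ 3 * (r * (y j)\<^sup>2) / 6"
      using y_le[OF that] by (intro divide_right_mono mult_left_mono mult_right_mono) auto
    finally show ?thesis by (simp add: mult.assoc)
  qed
  have "cmod ((\<Sum>j<n. p j *\<^sub>R iexp (t * y j)) - complex_of_real (1 - t\<^sup>2 * s / 2))
      = cmod (\<Sum>j<n. p j *\<^sub>R (iexp (t * y j) - a j))"
    unfolding sum_a[symmetric] by (simp add: scaleR_diff_right sum_subtractf)
  also have "\<dots> \<le> (\<Sum>j<n. p j * (\<bar>t\<bar> ^ 3 * r * (y j)\<^sup>2 / 6))"
  proof (intro order_trans[OF norm_sum] sum_mono)
    fix j assume j: "j \<in> {..<n}"
    then have "cmod (p j *\<^sub>R (iexp (t * y j) - a j)) = p j * cmod (iexp (t * y j) - a j)"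
      using p0 by simp
    also have "\<dots> \<le> p j * (\<bar>t\<bar> ^ 3 * r * (y j)\<^sup>2 / 6)"
      using j p0 remainder by (intro mult_left_mono) auto
    finally show "cmod (p j *\<^sub>R (iexp (t * y j) - a j)) \<le> p j * (\<bar>t\<bar> ^ 3 * r * (y j)\<^sup>2 / 6)" .
  qed
  also have "\<dots> = \<bar>t\<bar> ^ 3 * r * s / 6"
    unfolding s_def by (simp add: sum_distrib_left sum_divide_distrib algebra_simps)
  finally show ?thesis .
qed

lemma abs_one_minus_minus_exp_le:
  fixes a :: real
  assumes a: "0 \<le> a"
  shows "\<bar>(1 - a) - exp (- a)\<bar> \<le> a\<^sup>2"
proof -
  have "1 - a \<le> exp (- a)" using exp_ge_add_one_self[of "- a"] by simp
  moreover have "exp (- a) \<le> 1 / (1 + a)"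
    using a exp_ge_add_one_self[of a] by (simp add: exp_minus field_simps)
  moreover have "1 / (1 + a) = (1 - a) + a\<^sup>2 / (1 + a)"
    using a by (simp add: field_simps power2_eq_square)
  moreover have "a\<^sup>2 / (1 + a) \<le> a\<^sup>2" using a by (simp add: divide_le_eq field_simps)
  ultimately show ?thesis by linarith
qed

lemma abs_prod_one_minus_minus_exp_le:
  fixes a :: "'i \<Rightarrow> real"
  assumes a0: "\<And>i. i \<in> A \<Longrightarrow> 0 \<le> a i" and a_le: "\<And>i. i \<in> A \<Longrightarrow> a i \<le> b" and b1: "b \<le> 1"
  shows "\<bar>(\<Prod>i\<in>A. 1 - a i) - exp (- (\<Sum>i\<in>A. a i))\<bar> \<le> b * (\<Sum>i\<in>A. a i)"
proof (cases "finite A")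
  case True
  have "\<bar>(\<Prod>i\<in>A. 1 - a i) - (\<Prod>i\<in>A. exp (- a i))\<bar> \<le> (\<Sum>i\<in>A. \<bar>(1 - a i) - exp (- a i)\<bar>)"
    using a0 a_le b1 by (intro norm_prod_diff[where 'a=real, unfolded real_norm_def]) force+
  also have "\<dots> \<le> (\<Sum>i\<in>A. b * a i)"
  proof (intro sum_mono)
    fix i assume i: "i \<in> A"
    have "(a i)\<^sup>2 \<le> b * a i"
      unfolding power2_eq_square using a0[OF i] a_le[OF i] by (intro mult_right_mono)
    then show "\<bar>(1 - a i) - exp (- a i)\<bar> \<le> b * a i"
      using abs_one_minus_minus_exp_le[OF a0[OF i]] by linarith
  qed
  finally show ?thesis using True by (simp add: exp_sum sum_distrib_left flip: sum_negf)
qed simp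

lemma weighted_sum_square_le:
  fixes p y :: "nat \<Rightarrow> real"
  assumes p0: "\<And>j. j < n \<Longrightarrow> 0 \<le> p j" and p_sum: "(\<Sum>j<n. p j) = 1"
    and y_le: "\<And>j. j < n \<Longrightarrow> \<bar>y j\<bar> \<le> r"
  shows "(\<Sum>j<n. p j * (y j)\<^sup>2) \<le> r\<^sup>2"
proof -
  have "(\<Sum>j<n. p j * (y j)\<^sup>2) \<le> (\<Sum>j<n. p j * r\<^sup>2)"
  proof (intro sum_mono mult_left_mono)
    fix j assume "j \<in> {..<n}"
    then have "\<bar>y j\<bar> \<le> r" "0 \<le> p j" using y_le p0 by auto
    then show "(y j)\<^sup>2 \<le> r\<^sup>2" "0 \<le> p j" by (metis abs_ge_zero power2_abs power_mono)+
  qed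
  also have "\<dots> = r\<^sup>2" using p_sum by (simp flip: sum_distrib_right)
  finally show ?thesis .
qed

text \<open>Compare each factor with 1 - t^2 s_i / 2 (Taylor) and the product of these with
  exp (- t^2 / 2).\<close>
lemma char_prod_minus_normal_bound:
  fixes n :: "nat \<Rightarrow> nat" and p y :: "nat \<Rightarrow> nat \<Rightarrow> real" and r t :: real
  assumes p0: "\<And>i j. i < I \<Longrightarrow> j < n i \<Longrightarrow> 0 \<le> p i j"
    and p_sum: "\<And>i. i < I \<Longrightarrow> (\<Sum>j<n i. p i j) = 1"
    and centred: "\<And>i. i < I \<Longrightarrow> (\<Sum>j<n i. p i j * y i j) = 0"
    and variance: "(\<Sum>i<I. \<Sum>j<n i. p i j * (y i j)\<^sup>2) = 1"
    and y_le: "\<And>i j. i < I \<Longrightarrow> j < n i \<Longrightarrow> \<bar>y i j\<bar> \<le> r"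
    and rt: "r\<^sup>2 * t\<^sup>2 \<le> 2"
  shows "cmod ((\<Prod>i<I. \<Sum>j<n i. p i j *\<^sub>R iexp (t * y i j)) - complex_of_real (exp (- (t\<^sup>2) / 2)))
      \<le> \<bar>t\<bar> ^ 3 * r / 6 + t ^ 4 * r\<^sup>2 / 4"
proof -
  define s where "s i = (\<Sum>j<n i. p i j * (y i j)\<^sup>2)" for i
  define a where "a i = t\<^sup>2 * s i / 2" for i
  define \<phi> where "\<phi> i = (\<Sum>j<n i. p i j *\<^sub>R iexp (t * y i j))" for i
  have s0: "0 \<le> s i" if "i < I" for i
    unfolding s_def using p0 that by (intro sum_nonneg mult_nonneg_nonneg) auto
  have s_le: "s i \<le> r\<^sup>2" if "i < I" for i
    unfolding s_def using p0 p_sum y_le that by (intro weighted_sum_square_le) auto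
  have a0: "0 \<le> a i" if "i < I" for i unfolding a_def using s0[OF that] by simp
  have a_le: "a i \<le> t\<^sup>2 * r\<^sup>2 / 2" if "i < I" for i
    unfolding a_def using s_le[OF that] by (intro divide_right_mono mult_left_mono) auto
  have a1: "t\<^sup>2 * r\<^sup>2 / 2 \<le> 1" using rt by (simp add: mult.commute)
  have sum_a: "(\<Sum>i<I. a i) = t\<^sup>2 / 2"
    unfolding a_def using variance s_def by (simp flip: sum_divide_distrib sum_distrib_left)
  have taylor: "cmod (\<phi> i - complex_of_real (1 - a i)) \<le> \<bar>t\<bar> ^ 3 * r * s i / 6"
    if "i < I" for i
    unfolding \<phi>_def a_def s_def
    using norm_weighted_iexp_sum_taylor[of "n i" "p i" "y i" r t] p0 p_sum centred y_le that
    by (simp add: mult.assoc)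
  have "cmod ((\<Prod>i<I. \<phi> i) - complex_of_real (\<Prod>i<I. 1 - a i))
      \<le> (\<Sum>i<I. cmod (\<phi> i - complex_of_real (1 - a i)))"
    unfolding of_real_prod
  proof (intro norm_prod_diff)
    fix i assume i: "i \<in> {..<I}"
    then show "cmod (\<phi> i) \<le> 1"
      unfolding \<phi>_def using p0 p_sum by (intro norm_weighted_iexp_sum_le_1) auto
    show "cmod (complex_of_real (1 - a i)) \<le> 1"
      unfolding norm_of_real using a0[of i] a_le[of i] a1 i by auto
  qed
  also have "\<dots> \<le> (\<Sum>i<I. \<bar>t\<bar> ^ 3 * r * s i / 6)" using taylor by (intro sum_mono) auto
  also have "\<dots> = \<bar>t\<bar> ^ 3 * r / 6"
    using variance unfolding s_def by (simp flip: sum_divide_distrib sum_distrib_left)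
  finally have "cmod ((\<Prod>i<I. \<phi> i) - complex_of_real (\<Prod>i<I. 1 - a i)) \<le> \<bar>t\<bar> ^ 3 * r / 6" .
  moreover have "cmod (complex_of_real ((\<Prod>i<I. 1 - a i) - exp (- (t\<^sup>2) / 2)))
      \<le> t\<^sup>2 * r\<^sup>2 / 2 * (t\<^sup>2 / 2)"
    unfolding norm_of_real
    using abs_prod_one_minus_minus_exp_le[of "{..<I}" a, OF a0 a_le a1] by (simp add: sum_a)
  moreover have "t\<^sup>2 * r\<^sup>2 / 2 * (t\<^sup>2 / 2) = t ^ 4 * r\<^sup>2 / 4"
    by (simp add: power2_eq_square power4_eq_xxxx field_simps)
  moreover have "cmod ((\<Prod>i<I. \<phi> i) - complex_of_real (exp (- (t\<^sup>2) / 2)))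
      \<le> cmod ((\<Prod>i<I. \<phi> i) - complex_of_real (\<Prod>i<I. 1 - a i))
        + cmod (complex_of_real ((\<Prod>i<I. 1 - a i) - exp (- (t\<^sup>2) / 2)))"
    by (rule order_trans[OF _ norm_triangle_ineq]) simp
  ultimately show ?thesis unfolding \<phi>_def by linarith
qed

lemma clt_bounded_triangular_array:
  fixes n :: "nat \<Rightarrow> nat \<Rightarrow> nat" and p y :: "nat \<Rightarrow> nat \<Rightarrow> nat \<Rightarrow> real" and r :: "nat \<Rightarrow> real"
  assumes p0: "\<And>I i j. i < I \<Longrightarrow> j < n I i \<Longrightarrow> 0 \<le> p I i j"
    and p_sum: "\<And>I i. i < I \<Longrightarrow> (\<Sum>j<n I i. p I i j) = 1"
    and centred: "\<And>I i. i < I \<Longrightarrow> (\<Sum>j<n I i. p I i j * y I i j) = 0"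
    and variance: "eventually (\<lambda>I. (\<Sum>i<I. \<Sum>j<n I i. p I i j * (y I i j)\<^sup>2) = 1) sequentially"
    and y_le: "\<And>I i j. i < I \<Longrightarrow> j < n I i \<Longrightarrow> \<bar>y I i j\<bar> \<le> r I"
    and r0: "r \<longlonglongrightarrow> 0"
  shows "weak_conv_m (\<lambda>I. distr (measure_pmf (assignment_pmf I (n I) (p I))) borel
            (\<lambda>z. \<Sum>i<I. y I i (z i))) std_normal_distribution"
proof (rule levy_continuity)
  show "real_distribution (distr (measure_pmf (assignment_pmf I (n I) (p I))) borel
            (\<lambda>z. \<Sum>i<I. y I i (z i)))" for I
    by (intro prob_space.real_distribution_distr) (auto simp: prob_space_measure_pmf)
  show "real_distribution std_normal_distribution" by (rule real_dist_normal_dist)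
next
  fix t :: real
  define C where "C I = char (distr (measure_pmf (assignment_pmf I (n I) (p I))) borel
            (\<lambda>z. \<Sum>i<I. y I i (z i))) t" for I
  define B where "B I = \<bar>t\<bar> ^ 3 * r I / 6 + t ^ 4 * (r I)\<^sup>2 / 4" for I
  have "(\<lambda>I. (r I)\<^sup>2 * t\<^sup>2) \<longlonglongrightarrow> 0\<^sup>2 * t\<^sup>2" by (intro tendsto_intros r0)
  then have "eventually (\<lambda>I. (r I)\<^sup>2 * t\<^sup>2 < 2) sequentially" by (rule order_tendstoD) simp
  then have close: "eventually (\<lambda>I. cmod (C I - complex_of_real (exp (- (t\<^sup>2) / 2))) \<le> B I)
      sequentially"
    using variance
  proof eventually_elim
    case (elim I)
    have "C I = (\<Prod>i<I. \<Sum>j<n I i. p I i j *\<^sub>R iexp (t * y I i j))"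
      unfolding C_def by (rule char_distr_sum_assignment) (use p0 p_sum in auto)
    then show ?case unfolding B_def
      by (simp only:) (rule char_prod_minus_normal_bound, use elim p0 p_sum centred y_le in auto)
  qed
  have "B \<longlonglongrightarrow> \<bar>t\<bar> ^ 3 * 0 / 6 + t ^ 4 * 0\<^sup>2 / 4"
    unfolding B_def by (intro tendsto_intros r0) simp_all
  then have "B \<longlonglongrightarrow> 0" by simp
  then have "(\<lambda>I. C I - complex_of_real (exp (- (t\<^sup>2) / 2))) \<longlonglongrightarrow> 0"
    by (rule Lim_null_comparison[OF close])
  then show "(\<lambda>I. char (distr (measure_pmf (assignment_pmf I (n I) (p I))) borel
            (\<lambda>z. \<Sum>i<I. y I i (z i))) t) \<longlonglongrightarrow> char std_normal_distribution t"
    unfolding C_def char_std_normal_distribution by (rule LIM_zero_cancel)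
qed

lemma isCont_Phi: "isCont Phi x"
proof -
  interpret N: real_distribution std_normal_distribution by (rule real_dist_normal_dist)
  have "emeasure std_normal_distribution {x}
      = (\<integral>\<^sup>+ y. ennreal (std_normal_density y) * indicator {x} y \<partial>lborel)"
    by (subst emeasure_density) auto
  also have "\<dots> = (\<integral>\<^sup>+ y. 0 \<partial>(lborel::real measure))"
  proof (rule nn_integral_cong_AE)
    show "AE y in lborel. ennreal (std_normal_density y) * indicator {x} y = 0"
      using AE_lborel_singleton[of x] by eventually_elim auto
  qed
  finally have "measure std_normal_distribution {x} = 0" by (simp add: measure_def)
  then show ?thesis unfolding Phi_def by (simp add: N.isCont_cdf)
qed

lemma S_A1_le_sum_true_v2:
  assumes "\<And>i. i < I \<Longrightarrow> 2 \<le> n i" and "\<And>i j. i < I \<Longrightarrow> j < n i \<Longrightarrow> 0 \<le> p i j"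
    and "\<And>i. i < I \<Longrightarrow> (\<Sum>j<n i. p i j) = 1"
  shows "S_A1 I n p q \<le> (\<Sum>i<I. true_v2 (n i) (p i) (q i))"
  unfolding S_A1_def using assms by (intro sum_mono A1_term_le_true_v2) auto

lemma sum_minus_sum_excess_le:
  fixes f g :: "'a \<Rightarrow> real"
  assumes B: "finite B" and A: "A = {i \<in> B. g i < f i}"
  shows "sum f B - (\<Sum>i\<in>A. f i - g i) \<le> sum g B"
proof -
  have A_sub: "A \<subseteq> B" using A by auto
  have "(\<Sum>i\<in>B - A. f i - g i) \<le> 0"
    using A by (intro sum_nonpos) (auto simp: not_less)
  moreover have "(\<Sum>i\<in>B. f i - g i) = (\<Sum>i\<in>A. f i - g i) + (\<Sum>i\<in>B - A. f i - g i)"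
    using sum.subset_diff[OF A_sub B, of "\<lambda>i. f i - g i"] by (simp add: add.commute)
  ultimately show ?thesis by (simp add: sum_subtractf)
qed

lemma sqrt_minus_div_sqrt_le:
  fixes V E W :: real
  assumes V: "0 < V" and E: "0 \<le> E" and W: "V - E \<le> W" "0 \<le> W"
  shows "sqrt V - E / sqrt V \<le> sqrt W"
proof -
  have eq: "sqrt V - E / sqrt V = (V - E) / sqrt V"
    using V by (simp add: field_simps)
  show ?thesis
  proof (cases "V - E \<le> 0")
    case True
    then have "(V - E) / sqrt V \<le> 0" using V by (simp add: divide_nonpos_pos)
    then show ?thesis unfolding eq using real_sqrt_ge_zero[OF W(2)] by linarith
  next
    case False
    have "sqrt (V - E) * sqrt (V - E) = V - E" using False by simp
    then have "(V - E) / sqrt V = sqrt (V - E) * (sqrt (V - E) / sqrt V)"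
      by (simp only: times_divide_eq_right)
    also have "\<dots> \<le> sqrt (V - E) * 1"
      using False V E by (intro mult_left_mono) (simp_all add: divide_le_eq_1)
    also have "\<dots> \<le> sqrt W" using W by simp
    finally show ?thesis unfolding eq .
  qed
qed

text \<open>On the sets where v_i^2(Gamma_i) underestimates v_i^2, A2 makes the excess of mu(Gamma)
  over the true mean outweigh c times the variance deficit; elsewhere sigma(Gamma) only gains.\<close>
lemma true_mean_plus_c_sd_le_mu_sigma_Gamma:
  fixes n :: "nat \<Rightarrow> nat" and p q :: "nat \<Rightarrow> nat \<Rightarrow> real" and G :: "nat \<Rightarrow> ereal" and c :: real
  assumes sizes: "\<And>i. i < I \<Longrightarrow> 2 \<le> n i"
    and p0: "\<And>i j. i < I \<Longrightarrow> j < n i \<Longrightarrow> 0 \<le> p i j"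
    and p_sum: "\<And>i. i < I \<Longrightarrow> (\<Sum>j<n i. p i j) = 1" and G1: "\<And>i. i < I \<Longrightarrow> 1 \<le> G i"
    and G_dom: "\<And>i. i < I \<Longrightarrow> Gamma_star (n i) (p i) \<le> G i"
    and S_pos: "0 < S_A1 I n p q" and A2: "ereal c < A2_quantity I n p q G" and c: "0 \<le> c"
  shows "(\<Sum>i<I. true_mu (n i) (p i) (q i)) + c * sqrt (\<Sum>i<I. true_v2 (n i) (p i) (q i))
          \<le> mu_Gamma I n q G + c * sigma_Gamma I n q G"
proof -
  define mu where "mu i = true_mu (n i) (p i) (q i)" for i
  define v2 where "v2 i = true_v2 (n i) (p i) (q i)" for i
  define mG where "mG i = mu_G (n i) (q i) (G i)" for i
  define vG where "vG i = v2_G (n i) (q i) (G i)" for i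
  define A where "A = A_set I n p q G"
  define D where "D = (\<Sum>i\<in>A. mG i - mu i)"
  define E where "E = (\<Sum>i\<in>A. v2 i - vG i)"
  define V where "V = (\<Sum>i<I. v2 i)"
  have SV: "S_A1 I n p q \<le> V"
    unfolding V_def v2_def using assms by (intro S_A1_le_sum_true_v2) auto
  have V_pos: "0 < V" using S_pos SV by simp
  have A_eq: "A = {i \<in> {..<I}. vG i < v2 i}"
    unfolding A_def A_set_def vG_def v2_def by auto
  have A_iff: "i \<in> A \<longleftrightarrow> i < I \<and> vG i < v2 i" for i
    unfolding A_eq by simp
  have A_sub: "A \<subseteq> {..<I}" unfolding A_eq by auto
  then have fin_A: "finite A" by (rule finite_subset) simp
  have mu_le: "mu i \<le> mG i" if "i < I" for i
    unfolding mu_def mG_def using assms that by (intro true_mu_le_mu_G) auto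
  have D_le: "D \<le> mu_Gamma I n q G - (\<Sum>i<I. mu i)"
  proof -
    have "D \<le> (\<Sum>i<I. mG i - mu i)"
      unfolding D_def using A_sub mu_le by (intro sum_mono2) auto
    then show ?thesis unfolding mu_Gamma_def mG_def by (simp add: sum_subtractf)
  qed
  have "V - E \<le> (\<Sum>i<I. vG i)"
    unfolding V_def E_def by (rule sum_minus_sum_excess_le[OF finite_lessThan A_eq])
  moreover have "0 \<le> (\<Sum>i<I. vG i)"
  proof (rule sum_nonneg)
    fix i assume "i \<in> {..<I}"
    then show "0 \<le> vG i" unfolding vG_def using sizes G1 by (intro v2_G_nonneg) auto
  qed
  moreover have E0: "0 \<le> E" unfolding E_def by (rule sum_nonneg) (simp add: A_iff)
  ultimately have sigma: "sqrt V - E / sqrt V \<le> sigma_Gamma I n q G"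
    unfolding sigma_Gamma_def vG_def[symmetric] using V_pos by (intro sqrt_minus_div_sqrt_le)
  have "c * E / sqrt V \<le> D"
  proof (cases "A = {}")
    case False
    have E_pos: "0 < E" unfolding E_def using False fin_A A_iff by (intro sum_pos) auto
    have "Delta_mu I n p q G / Delta_v2 I n p q G = D / E"
      unfolding Delta_mu_def Delta_v2_def A_def[symmetric] D_def E_def mu_def mG_def v2_def vG_def
      using False fin_A by (simp add: card_gt_0_iff)
    then have "c < D / E * sqrt (S_A1 I n p q)"
      using A2 False unfolding A2_quantity_def A_def by simp
    also have "\<dots> \<le> D / E * sqrt V"
    proof (rule mult_left_mono)
      show "0 \<le> D / E" unfolding D_def using E_pos mu_le A_sub
        by (intro divide_nonneg_pos sum_nonneg) auto
    qed (use SV in simp)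
    finally have "c * E < D * sqrt V" using E_pos by (simp add: field_simps)
    then show ?thesis using V_pos by (simp add: field_simps)
  qed (simp add: D_def E_def)
  then have "(\<Sum>i<I. mu i) + c * sqrt V \<le> (\<Sum>i<I. mu i) + D + c * (sqrt V - E / sqrt V)"
    by (simp add: algebra_simps)
  also have "\<dots> \<le> mu_Gamma I n q G + c * sigma_Gamma I n q G"
    using D_le mult_left_mono[OF sigma c] by linarith
  finally show ?thesis unfolding mu_def v2_def V_def .
qed

definition standardized_T_distr ::
    "nat \<Rightarrow> (nat \<Rightarrow> nat) \<Rightarrow> (nat \<Rightarrow> nat \<Rightarrow> real) \<Rightarrow> (nat \<Rightarrow> nat \<Rightarrow> real) \<Rightarrow> real measure"
  where "standardized_T_distr I n p q = distr (measure_pmf (assignment_pmf I n p)) borel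
    (\<lambda>z. (Tstat I q z - (\<Sum>i<I. true_mu (n i) (p i) (q i)))
          / sqrt (\<Sum>i<I. true_v2 (n i) (p i) (q i)))"

lemma prob_T_ge_le_standardized_tail:
  assumes p0: "\<And>i j. i < I \<Longrightarrow> j < n i \<Longrightarrow> 0 \<le> p i j"
    and p_sum: "\<And>i. i < I \<Longrightarrow> (\<Sum>j<n i. p i j) = 1"
    and V_pos: "0 < (\<Sum>i<I. true_v2 (n i) (p i) (q i))"
    and t: "(\<Sum>i<I. true_mu (n i) (p i) (q i)) + c * sqrt (\<Sum>i<I. true_v2 (n i) (p i) (q i)) \<le> t"
    and a: "a < c"
  shows "prob_T_ge I n p q t \<le> 1 - cdf (standardized_T_distr I n p q) a"
proof -
  define W where "W z = (Tstat I q z - (\<Sum>i<I. true_mu (n i) (p i) (q i)))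
    / sqrt (\<Sum>i<I. true_v2 (n i) (p i) (q i))" for z
  have "prob_T_ge I n p q t \<le> (\<Sum>z\<in>Zset I n. prob_z I p z * indicator {a<..} (W z))"
    unfolding prob_T_ge_def
  proof (intro sum_mono)
    fix z assume z: "z \<in> Zset I n"
    have "c \<le> W z" if "t \<le> Tstat I q z"
      unfolding W_def using that t V_pos by (simp add: field_simps)
    then show "(if t \<le> Tstat I q z then prob_z I p z else 0) \<le> prob_z I p z * indicator {a<..} (W z)"
      using a prob_z_nonneg[OF p0 z] by (auto simp: indicator_def)
  qed
  also have "\<dots> = (\<Sum>z\<in>Zset I n. prob_z I p z) - (\<Sum>z\<in>Zset I n. prob_z I p z * indicator {..a} (W z))"
    by (simp flip: sum_subtractf) (intro sum.cong refl, auto simp: indicator_def)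
  also have "\<dots> = 1 - cdf (standardized_T_distr I n p q) a"
    unfolding cdf_def standardized_T_distr_def W_def[symmetric]
    using measure_distr_assignment_pmf[OF p0 p_sum, where S="{..a}" and W=W]
      sum_prob_z_eq_1[OF p_sum]
    by simp
  finally show ?thesis .
qed

lemma sqrt_div_tendsto_0:
  fixes M S V :: "nat \<Rightarrow> real"
  assumes "eventually (\<lambda>I. 0 < S I \<and> S I \<le> V I \<and> 0 \<le> M I) sequentially"
    and "(\<lambda>I. M I / S I) \<longlonglongrightarrow> 0"
  shows "(\<lambda>I. sqrt (M I) / sqrt (V I)) \<longlonglongrightarrow> 0"
proof (rule tendsto_sandwich[where f="\<lambda>_. 0" and h="\<lambda>I. sqrt (M I / S I)"])
  show "eventually (\<lambda>I. 0 \<le> sqrt (M I) / sqrt (V I)) sequentially"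
    using assms(1) by eventually_elim simp
  show "eventually (\<lambda>I. sqrt (M I) / sqrt (V I) \<le> sqrt (M I / S I)) sequentially"
    using assms(1) by eventually_elim
      (auto simp flip: real_sqrt_divide intro!: real_sqrt_le_mono divide_left_mono)
  have "(\<lambda>I. sqrt (M I / S I)) \<longlonglongrightarrow> sqrt 0" using assms(2) by (intro tendsto_intros)
  then show "(\<lambda>I. sqrt (M I / S I)) \<longlonglongrightarrow> 0" by simp
qed simp

lemma sum_weighted_standardized_eq_0:
  fixes p q :: "nat \<Rightarrow> real"
  assumes p_sum: "(\<Sum>j<n. p j) = 1"
  shows "(\<Sum>j<n. p j * ((q j - true_mu n p q) / s)) = 0"
proof -
  have "(\<Sum>j<n. p j * (q j - true_mu n p q))
      = (\<Sum>j<n. p j * q j) - true_mu n p q * (\<Sum>j<n. p j)"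
    by (simp add: algebra_simps sum_subtractf sum_distrib_left)
  then show ?thesis using p_sum by (simp add: true_mu_def flip: sum_divide_distrib)
qed

lemma sum_weighted_standardized_square_eq_1:
  fixes n :: "nat \<Rightarrow> nat" and p q :: "nat \<Rightarrow> nat \<Rightarrow> real"
  assumes p_sum: "\<And>i. i < I \<Longrightarrow> (\<Sum>j<n i. p i j) = 1"
    and V_pos: "0 < (\<Sum>i<I. true_v2 (n i) (p i) (q i))"
  shows "(\<Sum>i<I. \<Sum>j<n i. p i j * ((q i j - true_mu (n i) (p i) (q i))
            / sqrt (\<Sum>k<I. true_v2 (n k) (p k) (q k)))\<^sup>2) = 1"
proof -
  have "(\<Sum>j<n i. p i j * ((q i j - true_mu (n i) (p i) (q i))
            / sqrt (\<Sum>k<I. true_v2 (n k) (p k) (q k)))\<^sup>2)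
      = true_v2 (n i) (p i) (q i) / (\<Sum>k<I. true_v2 (n k) (p k) (q k))" if "i < I" for i
    unfolding true_v2_eq_centered[OF p_sum[OF that]] using V_pos
    by (simp add: power_divide sum_divide_distrib)
  then show ?thesis using V_pos by (simp flip: sum_divide_distrib)
qed

lemma abs_standardized_le_sqrt_Max_Rng:
  fixes n :: "nat \<Rightarrow> nat" and p q :: "nat \<Rightarrow> nat \<Rightarrow> real"
  assumes sizes: "\<And>i. i < I \<Longrightarrow> 2 \<le> n i"
    and p0: "\<And>i j. i < I \<Longrightarrow> j < n i \<Longrightarrow> 0 \<le> p i j"
    and p_sum: "\<And>i. i < I \<Longrightarrow> (\<Sum>j<n i. p i j) = 1"
    and ij: "i < I" "j < n i"
  defines "V \<equiv> \<Sum>k<I. true_v2 (n k) (p k) (q k)"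
  shows "\<bar>(q i j - true_mu (n i) (p i) (q i)) / sqrt V\<bar>
      \<le> sqrt (Max ((\<lambda>k. (Rng (n k) (q k))\<^sup>2) ` {..<I})) / sqrt V"
proof -
  have dev: "\<bar>q i j - true_mu (n i) (p i) (q i)\<bar> \<le> Rng (n i) (q i)"
    using sizes p0 p_sum ij by (intro abs_minus_true_mu_le_Rng) auto
  also have "\<dots> \<le> sqrt (Max ((\<lambda>k. (Rng (n k) (q k))\<^sup>2) ` {..<I}))"
    using ij dev by (intro real_le_rsqrt Max_ge) auto
  finally have "\<bar>q i j - true_mu (n i) (p i) (q i)\<bar>
      \<le> sqrt (Max ((\<lambda>k. (Rng (n k) (q k))\<^sup>2) ` {..<I}))" .
  moreover have "0 \<le> V" unfolding V_def using p0 p_sum by (intro sum_nonneg true_v2_nonneg) auto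
  ultimately show ?thesis by (simp add: abs_div divide_right_mono)
qed

text \<open>The standardized scores are bounded by max_i R_i / v, and v^2 \<ge> sum R_i^2/(n_i Gamma*_i)^3,
  so under A1 the bound tends to 0.\<close>
lemma standardized_T_weak_conv:
  fixes n :: "nat \<Rightarrow> nat \<Rightarrow> nat" and p q :: "nat \<Rightarrow> nat \<Rightarrow> nat \<Rightarrow> real"
  assumes sizes: "\<And>I i. i < I \<Longrightarrow> 2 \<le> n I i"
    and p0: "\<And>I i j. i < I \<Longrightarrow> j < n I i \<Longrightarrow> 0 \<le> p I i j"
    and p_sum: "\<And>I i. i < I \<Longrightarrow> (\<Sum>j<n I i. p I i j) = 1"
    and A1_pos: "eventually (\<lambda>I. 0 < S_A1 I (n I) (p I) (q I)) sequentially"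
    and A1: "(\<lambda>I. Max ((\<lambda>i. (Rng (n I i) (q I i))\<^sup>2) ` {..<I}) / S_A1 I (n I) (p I) (q I))
               \<longlonglongrightarrow> 0"
  shows "weak_conv_m (\<lambda>I. standardized_T_distr I (n I) (p I) (q I)) std_normal_distribution"
proof -
  define V where "V I = (\<Sum>i<I. true_v2 (n I i) (p I i) (q I i))" for I
  define y where "y I i j = (q I i j - true_mu (n I i) (p I i) (q I i)) / sqrt (V I)" for I i j
  define M where "M I = Max ((\<lambda>i. (Rng (n I i) (q I i))\<^sup>2) ` {..<I})" for I
  have SV: "S_A1 I (n I) (p I) (q I) \<le> V I" for I
    unfolding V_def using sizes p0 p_sum by (intro S_A1_le_sum_true_v2) auto
  have distr_eq: "standardized_T_distr I (n I) (p I) (q I)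
      = distr (measure_pmf (assignment_pmf I (n I) (p I))) borel (\<lambda>z. \<Sum>i<I. y I i (z i))" for I
    unfolding standardized_T_distr_def y_def V_def Tstat_def
    by (simp add: diff_divide_distrib sum_subtractf sum_divide_distrib)
  have "eventually (\<lambda>I. (\<Sum>i<I. \<Sum>j<n I i. p I i j * (y I i j)\<^sup>2) = 1) sequentially"
    using A1_pos
  proof eventually_elim
    case (elim I)
    then show ?case using SV[of I] p_sum unfolding y_def V_def
      by (intro sum_weighted_standardized_square_eq_1) auto
  qed
  moreover have "(\<lambda>I. sqrt (M I) / sqrt (V I)) \<longlonglongrightarrow> 0"
  proof (rule sqrt_div_tendsto_0)
    show "eventually (\<lambda>I. 0 < S_A1 I (n I) (p I) (q I) \<and> S_A1 I (n I) (p I) (q I) \<le> V I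
        \<and> 0 \<le> M I) sequentially"
      using A1_pos
    proof eventually_elim
      case (elim I)
      then have "0 < I" unfolding S_A1_def by (cases I) auto
      then have "(Rng (n I 0) (q I 0))\<^sup>2 \<le> M I" unfolding M_def by (intro Max_ge) auto
      then show ?case using elim SV[of I] by (meson order_trans zero_le_power2)
    qed
  qed (use A1 in \<open>simp add: M_def\<close>)
  ultimately show ?thesis
    unfolding distr_eq
  proof (intro clt_bounded_triangular_array[where r="\<lambda>I. sqrt (M I) / sqrt (V I)"])
    show "\<bar>y I i j\<bar> \<le> sqrt (M I) / sqrt (V I)" if "i < I" "j < n I i" for I i j
      unfolding y_def V_def M_def using sizes p0 p_sum that
      by (intro abs_standardized_le_sqrt_Max_Rng) auto
    show "(\<Sum>j<n I i. p I i j * y I i j) = 0" if "i < I" for I i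
      unfolding y_def using p_sum[OF that] by (rule sum_weighted_standardized_eq_0)
  qed (use p0 p_sum in auto)
qed

lemma limsup_le_normal_tail:
  fixes P :: "nat \<Rightarrow> real" and M :: "nat \<Rightarrow> real measure"
  assumes conv: "weak_conv_m M std_normal_distribution"
    and tail: "\<And>a. a < c \<Longrightarrow> eventually (\<lambda>I. P I \<le> 1 - cdf (M I) a) sequentially"
  shows "limsup (\<lambda>I. ereal (P I)) \<le> ereal (1 - Phi c)"
proof -
  have cdf_conv: "(\<lambda>I. cdf (M I) x) \<longlonglongrightarrow> Phi x" for x
    using conv isCont_Phi[of x] unfolding weak_conv_m_def weak_conv_def Phi_def by blast
  have below: "limsup (\<lambda>I. ereal (P I)) \<le> ereal (1 - Phi a)" if "a < c" for a
  proof -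
    have "limsup (\<lambda>I. ereal (P I)) \<le> limsup (\<lambda>I. ereal (1 - cdf (M I) a))"
      using tail[OF that] by (intro Limsup_mono) (auto elim: eventually_mono)
    also have "\<dots> = ereal (1 - Phi a)"
      by (intro lim_imp_Limsup) (auto intro!: tendsto_intros cdf_conv)
    finally show ?thesis .
  qed
  have "(\<lambda>k. c - inverse (real (Suc k))) \<longlonglongrightarrow> c - 0"
    by (intro tendsto_intros LIMSEQ_inverse_real_of_nat)
  then have "(\<lambda>k. ereal (1 - Phi (c - inverse (real (Suc k))))) \<longlonglongrightarrow> ereal (1 - Phi c)"
    by (intro tendsto_intros isCont_tendsto_compose[OF isCont_Phi]) simp
  then show ?thesis by (rule LIMSEQ_le_const) (auto intro!: below)
qed

theorem theorem4:
  fixes n :: "nat \<Rightarrow> nat \<Rightarrow> nat"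
    and p :: "nat \<Rightarrow> nat \<Rightarrow> nat \<Rightarrow> real"
    and q :: "nat \<Rightarrow> nat \<Rightarrow> nat \<Rightarrow> real"
    and Gam :: "nat \<Rightarrow> nat \<Rightarrow> ereal"
  assumes sizes: "\<And>I i. i < I \<Longrightarrow> n I i \<ge> 2"
    and p_nonneg: "\<And>I i j. i < I \<Longrightarrow> j < n I i \<Longrightarrow> p I i j \<ge> 0"
    and p_sum: "\<And>I i. i < I \<Longrightarrow> (\<Sum>j<n I i. p I i j) = 1"
    and Gam_ge1: "\<And>I i. i < I \<Longrightarrow> Gam I i \<ge> 1"
    and Gam_dom: "\<And>I i. i < I \<Longrightarrow> Gamma_star (n I i) (p I i) \<le> Gam I i"
    and A1_pos: "eventually (\<lambda>I. S_A1 I (n I) (p I) (q I) > 0) sequentially"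
    and A1: "(\<lambda>I. (Max ((\<lambda>i. (Rng (n I i) (q I i))\<^sup>2) ` {..<I})) / S_A1 I (n I) (p I) (q I))
               \<longlonglongrightarrow> 0"
    and A2: "((\<lambda>I. A2_quantity I (n I) (p I) (q I) (Gam I)) \<longlongrightarrow> \<infinity>) sequentially"
    and c_nonneg: "(c::real) \<ge> 0"
  shows "limsup (\<lambda>I. ereal (prob_T_ge I (n I) (p I) (q I)
            (mu_Gamma I (n I) (q I) (Gam I) + c * sigma_Gamma I (n I) (q I) (Gam I))))
         \<le> ereal (1 - Phi c)"
proof (rule limsup_le_normal_tail)
  show "weak_conv_m (\<lambda>I. standardized_T_distr I (n I) (p I) (q I)) std_normal_distribution"
    using sizes p_nonneg p_sum A1_pos A1 by (rule standardized_T_weak_conv)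
  fix a assume "a < c"
  have "eventually (\<lambda>I. ereal c < A2_quantity I (n I) (p I) (q I) (Gam I)) sequentially"
    using A2 by (rule order_tendstoD) simp
  then show "eventually (\<lambda>I. prob_T_ge I (n I) (p I) (q I)
        (mu_Gamma I (n I) (q I) (Gam I) + c * sigma_Gamma I (n I) (q I) (Gam I))
      \<le> 1 - cdf (standardized_T_distr I (n I) (p I) (q I)) a) sequentially"
    using A1_pos
  proof eventually_elim
    case (elim I)
    have "0 < (\<Sum>i<I. true_v2 (n I i) (p I i) (q I i))"
      using elim S_A1_le_sum_true_v2[of I "n I" "p I" "q I"] sizes p_nonneg p_sum by force
    moreover have "(\<Sum>i<I. true_mu (n I i) (p I i) (q I i))
        + c * sqrt (\<Sum>i<I. true_v2 (n I i) (p I i) (q I i))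
        \<le> mu_Gamma I (n I) (q I) (Gam I) + c * sigma_Gamma I (n I) (q I) (Gam I)"
      using elim sizes p_nonneg p_sum Gam_ge1 Gam_dom c_nonneg
      by (intro true_mean_plus_c_sd_le_mu_sigma_Gamma) auto
    ultimately show ?case
      using p_nonneg p_sum \<open>a < c\<close> by (intro prob_T_ge_le_standardized_tail) auto
  qed
qed

end
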